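(* Let $G$ be a connected (finite, simple) graph, $\mathcal{F}$ a maximum induced forest of $G$, $S=V(G)\setminus V(\mathcal{F})$, $H$ the contracted graph, and $B$ a skeleton of $H$ with the maximum possible number of 2-edges among all skeletons (all as defined in the context). Let $L_S$ be the set of vertices of $S$ that are leaves of $B$ and let $B_1=B[V(B)\setminus L_S]$ (the inner skeleton). Then every leaf of $B_1$ is a tree vertex.
   Context: A maximum induced forest of $G$ is an induced forest of $G$ with the maximum number of vertices. Let $\mathcal{T}$ be the set of connected components (trees) of $\mathcal{F}$ and $S=V(G)\setminus V(\mathcal{F})$. The graph $H$ has vertex set $\{x_T : T\in\mathcal{T}\}\cup S$ (the $x_T$ are called tree vertices, the vertices of $S$ non-tree vertices) and edge set consisting of all edges of $G[S]$ together with all pairs $ux_T$ with $u\in S$, $T\in\mathcal{T}$ such that $u$ has at least one neighbor in $V(T)$ in $G$. An edge $ux_T$ of $H$ is a 2-edge if $u$ has at least two neighbors in $V(T)$ in $G$; all other edges of $H$ (including all edges with both endpoints in $S$) are 1-edges. A skeleton is a spanning tree of $H$ rooted at some tree vertex, with all edges directed towards the root (an in-arborescence). A leaf is a vertex of total degree 1. *)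

theory Defs
  imports Main
begin

definition simple_graph :: "'v set \<Rightarrow> 'v set set \<Rightarrow> bool" where
  "simple_graph V E \<longleftrightarrow> finite V \<and> (\<forall>e\<in>E. e \<subseteq> V \<and> card e = 2)"

definition reach :: "'v set set \<Rightarrow> 'v \<Rightarrow> 'v \<Rightarrow> bool" where
  "reach E = (\<lambda>x y. {x, y} \<in> E)\<^sup>*\<^sup>*"

definition connected_graph :: "'v set \<Rightarrow> 'v set set \<Rightarrow> bool" where
  "connected_graph V E \<longleftrightarrow> (\<forall>u\<in>V. \<forall>v\<in>V. reach E u v)"

definition is_cycle :: "'v set \<Rightarrow> 'v set set \<Rightarrow> 'v list \<Rightarrow> bool" where
  "is_cycle V E xs \<longleftrightarrow> length xs \<ge> 3 \<and> distinct xs \<and> set xs \<subseteq> V \<and>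
     (\<forall>i. Suc i < length xs \<longrightarrow> {xs ! i, xs ! Suc i} \<in> E) \<and> {last xs, hd xs} \<in> E"

definition acyclic_graph :: "'v set \<Rightarrow> 'v set set \<Rightarrow> bool" where
  "acyclic_graph V E \<longleftrightarrow> (\<nexists>xs. is_cycle V E xs)"

definition is_tree_graph :: "'v set \<Rightarrow> 'v set set \<Rightarrow> bool" where
  "is_tree_graph V E \<longleftrightarrow> simple_graph V E \<and> V \<noteq> {} \<and> connected_graph V E \<and> acyclic_graph V E"

definition induced_edges :: "'v set set \<Rightarrow> 'v set \<Rightarrow> 'v set set" where
  "induced_edges E X = {e \<in> E. e \<subseteq> X}"

definition induced_forest :: "'v set \<Rightarrow> 'v set set \<Rightarrow> 'v set \<Rightarrow> bool" where
  "induced_forest V E F \<longleftrightarrow> F \<subseteq> V \<and> acyclic_graph F (induced_edges E F)"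

definition max_induced_forest :: "'v set \<Rightarrow> 'v set set \<Rightarrow> 'v set \<Rightarrow> bool" where
  "max_induced_forest V E F \<longleftrightarrow> induced_forest V E F \<and>
     (\<forall>F'. induced_forest V E F' \<longrightarrow> card F' \<le> card F)"

definition components :: "'v set set \<Rightarrow> 'v set \<Rightarrow> 'v set set" where
  "components E F = {{y. reach (induced_edges E F) x y} | x. x \<in> F}"

text \<open>The contracted graph H: tree vertices are Inl T (T the vertex set of a tree of F),
  non-tree vertices are Inr u with u in S = V - F.\<close>
definition H_verts :: "'v set \<Rightarrow> 'v set set \<Rightarrow> 'v set \<Rightarrow> ('v set + 'v) set" where
  "H_verts V E F = Inl ` components E F \<union> Inr ` (V - F)"

definition H_edges :: "'v set \<Rightarrow> 'v set set \<Rightarrow> 'v set \<Rightarrow> ('v set + 'v) set set" where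
  "H_edges V E F =
     {{Inr u, Inr v} | u v. u \<in> V - F \<and> v \<in> V - F \<and> {u, v} \<in> E} \<union>
     {{Inr u, Inl T} | u T. u \<in> V - F \<and> T \<in> components E F \<and> (\<exists>w\<in>T. {u, w} \<in> E)}"

definition two_edge :: "'v set \<Rightarrow> 'v set set \<Rightarrow> 'v set \<Rightarrow> ('v set + 'v) set \<Rightarrow> bool" where
  "two_edge V E F e \<longleftrightarrow> (\<exists>u T. e = {Inr u, Inl T} \<and> u \<in> V - F \<and> T \<in> components E F \<and>
       2 \<le> card {w \<in> T. {u, w} \<in> E})"

text \<open>A skeleton: a spanning tree B (edge set) of H, rooted at a tree vertex r; edges are
  oriented towards r (the orientation is determined by B and r).\<close>
definition skeleton :: "'v set \<Rightarrow> 'v set set \<Rightarrow> 'v set \<Rightarrow> ('v set + 'v) \<Rightarrow> ('v set + 'v) set set \<Rightarrow> bool" where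
  "skeleton V E F r B \<longleftrightarrow> B \<subseteq> H_edges V E F \<and> is_tree_graph (H_verts V E F) B \<and>
     r \<in> Inl ` components E F"

definition num_two_edges :: "'v set \<Rightarrow> 'v set set \<Rightarrow> 'v set \<Rightarrow> ('v set + 'v) set set \<Rightarrow> nat" where
  "num_two_edges V E F B = card {e \<in> B. two_edge V E F e}"

definition degree :: "'w set set \<Rightarrow> 'w \<Rightarrow> nat" where
  "degree B v = card {e \<in> B. v \<in> e}"

definition is_leaf :: "'w set \<Rightarrow> 'w set set \<Rightarrow> 'w \<Rightarrow> bool" where
  "is_leaf W B v \<longleftrightarrow> v \<in> W \<and> degree B v = 1"

end

theory Submission
  imports Defs
begin

(* Suppose a leaf x of the inner skeleton were a non-tree vertex. Since x is not a leaf of B,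
  one of its edges in B joins it to a non-tree leaf y of B, and xy is a 1-edge. By maximality
  of the induced forest, adding y to it closes a cycle, so y has two neighbours in some tree T.
  Reattaching the leaf y to x_T instead of x keeps B a spanning tree and gains a 2-edge,
  contradicting the choice of B. *)

lemma reach_refl: "reach E a a"
  unfolding reach_def by simp

lemma reach_edge: "{a, b} \<in> E \<Longrightarrow> reach E a b"
  unfolding reach_def by auto

lemma reach_trans: "reach E a b \<Longrightarrow> reach E b c \<Longrightarrow> reach E a c"
  unfolding reach_def by simp

lemma reach_sym: "reach E a b \<Longrightarrow> reach E b a"
proof -
  have "symp (\<lambda>x y. {x, y} \<in> E)"
    by (simp add: symp_def insert_commute)
  then show "reach E a b \<Longrightarrow> reach E b a"
    unfolding reach_def by (blast dest: sympD[OF symp_rtranclp])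
qed

lemma reach_mono: "E \<subseteq> E' \<Longrightarrow> reach E a b \<Longrightarrow> reach E' a b"
  unfolding reach_def by (metis (no_types, lifting) mono_rtranclp subsetD)

lemma reach_without_pendant_edge:
  assumes pendant: "\<forall>e\<in>B. y \<in> e \<longrightarrow> e = {x, y}"
    and "reach B a b" "a \<noteq> y" "b \<noteq> y"
  shows "reach (B - {{x, y}}) a b"
proof -
  \<comment> \<open>A walk can enter the pendant vertex y only from x, so cutting it off there ends at x.\<close>
  have "reach (B - {{x, y}}) a (if c = y then x else c)" if "reach B a c" for c
    using that unfolding reach_def
  proof (induction rule: rtranclp_induct)
    case base
    then show ?case using \<open>a \<noteq> y\<close> by simp
  next
    case (step c d)
    consider "c = y" | "c \<noteq> y" "d = y" | "c \<noteq> y" "d \<noteq> y" by blast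
    then show ?case
    proof cases
      case 1
      then have "d \<in> {x, y}" using pendant step.hyps(2) by blast
      then show ?thesis using 1 step.IH by auto
    next
      case 2
      then have "c = x" using pendant step.hyps(2) by (metis doubleton_eq_iff insertI1 insert_commute)
      then show ?thesis using 2 step.IH by simp
    next
      case 3
      then have "{c, d} \<in> B - {{x, y}}" using step.hyps(2) by auto
      then show ?thesis using 3 step.IH by (simp add: rtranclp.rtrancl_into_rtrancl)
    qed
  qed
  from this[OF \<open>reach B a b\<close>] show ?thesis using \<open>b \<noteq> y\<close> by simp
qed

lemma all_less_split_last:
  assumes "0 < (L::nat)"
  shows "(\<forall>i<L. Q i) \<longleftrightarrow> (\<forall>i. Suc i < L \<longrightarrow> Q i) \<and> Q (L - 1)"
proof -
  obtain m where L: "L = Suc m" using assms gr0_implies_Suc by blast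
  have "(\<forall>i<Suc m. Q i) \<longleftrightarrow> (\<forall>i<m. Q i) \<and> Q m" by (auto simp: less_Suc_eq)
  then show ?thesis unfolding L by simp
qed

lemma is_cycle_iff_cyclic_adjacent:
  "is_cycle V E xs \<longleftrightarrow> 3 \<le> length xs \<and> distinct xs \<and> set xs \<subseteq> V \<and>
     (\<forall>i<length xs. {xs ! i, xs ! (Suc i mod length xs)} \<in> E)"
proof -
  have "(\<forall>i<length xs. {xs ! i, xs ! (Suc i mod length xs)} \<in> E) \<longleftrightarrow>
      (\<forall>i. Suc i < length xs \<longrightarrow> {xs ! i, xs ! Suc i} \<in> E) \<and> {last xs, hd xs} \<in> E"
    if "3 \<le> length xs"
  proof -
    let ?Q = "\<lambda>i. {xs ! i, xs ! (Suc i mod length xs)} \<in> E"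
    have "(\<forall>i<length xs. ?Q i) \<longleftrightarrow> (\<forall>i. Suc i < length xs \<longrightarrow> ?Q i) \<and> ?Q (length xs - 1)"
      using that by (intro all_less_split_last) auto
    moreover have "?Q i \<longleftrightarrow> {xs ! i, xs ! Suc i} \<in> E" if "Suc i < length xs" for i
      using that by simp
    moreover have "?Q (length xs - 1) \<longleftrightarrow> {last xs, hd xs} \<in> E"
    proof -
      have "xs \<noteq> []" using that by auto
      then have "last xs = xs ! (length xs - 1)" "hd xs = xs ! 0"
        by (simp_all add: last_conv_nth hd_conv_nth)
      moreover have "Suc (length xs - 1) = length xs" using that by simp
      ultimately show ?thesis by simp
    qed
    ultimately show ?thesis by auto
  qed
  then show ?thesis unfolding is_cycle_def by blast
qed

lemma is_cycle_rotate:
  assumes "is_cycle V E xs"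
  shows "is_cycle V E (rotate n xs)"
proof -
  let ?L = "length xs"
  have "{rotate n xs ! i, rotate n xs ! (Suc i mod ?L)} \<in> E" if "i < ?L" for i
  proof -
    have "(n + i) mod ?L < ?L" using that by (intro mod_less_divisor) auto
    then have "{xs ! ((n + i) mod ?L), xs ! (Suc ((n + i) mod ?L) mod ?L)} \<in> E"
      using assms unfolding is_cycle_iff_cyclic_adjacent by blast
    moreover have "Suc ((n + i) mod ?L) mod ?L = (n + Suc i mod ?L) mod ?L"
      by (simp add: mod_Suc_eq mod_add_right_eq)
    moreover have "Suc i mod ?L < ?L" using that by (intro mod_less_divisor) auto
    ultimately show ?thesis
      using that by (simp add: nth_rotate)
  qed
  then show ?thesis
    using assms unfolding is_cycle_iff_cyclic_adjacent by simp
qed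

lemma is_cycle_rotate_to_head:
  assumes "is_cycle V E xs" "v \<in> set xs"
  obtains zs where "is_cycle V E (v # zs)" "set (v # zs) = set xs"
proof -
  obtain ps qs where xs: "xs = ps @ v # qs" using assms(2) split_list by metis
  then have "rotate (length ps) xs = v # qs @ ps" by (simp add: rotate_append)
  then show ?thesis
    using that[of "qs @ ps"] is_cycle_rotate[OF assms(1), of "length ps"] xs by auto
qed

lemma is_cycle_mono:
  assumes "is_cycle V E xs" "set xs \<subseteq> V'" "\<And>e. e \<in> E \<Longrightarrow> e \<subseteq> set xs \<Longrightarrow> e \<in> E'"
  shows "is_cycle V' E' xs"
proof -
  have "{xs ! i, xs ! (Suc i mod length xs)} \<in> E'" if "i < length xs" for i
  proof (rule assms(3))
    show "{xs ! i, xs ! (Suc i mod length xs)} \<in> E"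
      using assms(1) that unfolding is_cycle_iff_cyclic_adjacent by blast
    have "Suc i mod length xs < length xs" using that by (intro mod_less_divisor) auto
    then show "{xs ! i, xs ! (Suc i mod length xs)} \<subseteq> set xs" using that by simp
  qed
  then show ?thesis
    using assms(1,2) unfolding is_cycle_iff_cyclic_adjacent by blast
qed

lemma reach_along_list:
  assumes "\<forall>i. Suc i < length zs \<longrightarrow> {zs ! i, zs ! Suc i} \<in> E" "z \<in> set zs"
  shows "reach (induced_edges E (set zs)) (hd zs) z"
  using assms
proof (induction zs)
  case Nil
  then show ?case by simp
next
  case (Cons a zs)
  show ?case
  proof (cases "z = a")
    case True
    then show ?thesis by (simp add: reach_refl)
  next
    case False
    then have "z \<in> set zs" "zs \<noteq> []" using Cons.prems(2) by auto
    have "\<forall>i. Suc i < length zs \<longrightarrow> {zs ! i, zs ! Suc i} \<in> E"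
      using Cons.prems(1) by auto
    then have "reach (induced_edges E (set zs)) (hd zs) z"
      using Cons.IH \<open>z \<in> set zs\<close> by blast
    then have "reach (induced_edges E (set (a # zs))) (hd zs) z"
      by (rule reach_mono[rotated]) (auto simp: induced_edges_def)
    moreover have "{a, hd zs} \<in> induced_edges E (set (a # zs))"
      using Cons.prems(1) \<open>zs \<noteq> []\<close> by (auto simp: induced_edges_def hd_conv_nth)
    ultimately show ?thesis by (metis list.sel(1) reach_edge reach_trans)
  qed
qed

lemma is_cycle_through_vertex:
  assumes "is_cycle V E xs" "v \<in> set xs"
  obtains a b where "a \<noteq> b" "{v, a} \<in> E" "{v, b} \<in> E" "a \<in> set xs - {v}"
    "reach (induced_edges E (set xs - {v})) a b"
proof -
  obtain zs where c: "is_cycle V E (v # zs)" and set_zs: "set (v # zs) = set xs"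
    using is_cycle_rotate_to_head[OF assms] .
  have len: "2 \<le> length zs" and dist: "distinct (v # zs)"
    and adj: "\<forall>i. Suc i < length (v # zs) \<longrightarrow> {(v # zs) ! i, (v # zs) ! Suc i} \<in> E"
    and closing: "{last (v # zs), hd (v # zs)} \<in> E"
    using c unfolding is_cycle_def by auto
  have "zs \<noteq> []" using len by auto
  then have hd_last: "hd zs = zs ! 0" "last zs = zs ! (length zs - 1)"
    by (simp_all add: hd_conv_nth last_conv_nth)
  have "hd zs \<noteq> last zs"
    using dist len unfolding hd_last by (subst nth_eq_iff_index_eq) auto
  moreover have "{v, hd zs} \<in> E" using adj len hd_last by force
  moreover have "{v, last zs} \<in> E" using closing \<open>zs \<noteq> []\<close> by (simp add: insert_commute)
  moreover have "set zs = set xs - {v}" using set_zs dist by auto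
  moreover have "hd zs \<in> set zs" "last zs \<in> set zs" using \<open>zs \<noteq> []\<close> by simp_all
  moreover have "reach (induced_edges E (set zs)) (hd zs) (last zs)"
    using adj \<open>last zs \<in> set zs\<close> by (intro reach_along_list) auto
  ultimately show ?thesis using that by auto
qed

lemma simple_graph_finite_edges: "simple_graph V E \<Longrightarrow> finite E"
  unfolding simple_graph_def by (metis Pow_iff finite_Pow_iff rev_finite_subset subsetI)

lemma is_tree_graph_move_leaf:
  assumes tree: "is_tree_graph W B" and pendant: "\<forall>e\<in>B. y \<in> e \<longrightarrow> e = {x, y}"
    and "y \<in> W" "t \<in> W" "t \<noteq> y"
  shows "is_tree_graph W (insert {y, t} (B - {{x, y}}))" (is "is_tree_graph W ?B'")
proof -
  have simple: "simple_graph W B" and "W \<noteq> {}" and conn: "connected_graph W B"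
    and acyc: "acyclic_graph W B"
    using tree unfolding is_tree_graph_def by auto
  have "simple_graph W ?B'"
    using simple assms(3-5) unfolding simple_graph_def by auto
  moreover have "connected_graph W ?B'"
  proof -
    have to_t: "reach ?B' a t" if "a \<in> W" for a
    proof (cases "a = y")
      case True
      then show ?thesis by (simp add: reach_edge)
    next
      case False
      have "reach B a t" using conn that \<open>t \<in> W\<close> unfolding connected_graph_def by blast
      then have "reach (B - {{x, y}}) a t"
        using reach_without_pendant_edge[OF pendant] False \<open>t \<noteq> y\<close> by blast
      then show ?thesis by (rule reach_mono[rotated]) auto
    qed
    show ?thesis
      unfolding connected_graph_def
    proof (intro ballI)
      fix a b assume "a \<in> W" "b \<in> W"
      then show "reach ?B' a b" by (metis reach_sym reach_trans to_t)
    qed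
  qed
  moreover have "\<not> is_cycle W ?B' xs" for xs
  proof
    assume cycle: "is_cycle W ?B' xs"
    show False
    proof (cases "y \<in> set xs")
      case True
      have neighbour_t: "a = t" if "{y, a} \<in> ?B'" for a
      proof -
        have "{y, a} = {y, t}" using that pendant by auto
        then show ?thesis using \<open>t \<noteq> y\<close> by (auto simp: doubleton_eq_iff)
      qed
      obtain a b where "a \<noteq> b" "{y, a} \<in> ?B'" "{y, b} \<in> ?B'"
        using is_cycle_through_vertex[OF cycle True] by metis
      then show False using neighbour_t by blast
    next
      case False
      have "is_cycle W B xs"
      proof (rule is_cycle_mono[OF cycle])
        show "set xs \<subseteq> W" using cycle by (simp add: is_cycle_def)
        show "e \<in> B" if "e \<in> ?B'" "e \<subseteq> set xs" for e using that False by auto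
      qed
      then show False using acyc unfolding acyclic_graph_def by blast
    qed
  qed
  ultimately show ?thesis
    using \<open>W \<noteq> {}\<close> unfolding is_tree_graph_def acyclic_graph_def by blast
qed

lemma max_induced_forest_two_neighbours_in_component:
  assumes simple: "simple_graph V E" and max: "max_induced_forest V E F" and w: "w \<in> V - F"
  shows "\<exists>T\<in>components E F. 2 \<le> card {z \<in> T. {w, z} \<in> E}"
proof -
  have "F \<subseteq> V" and acyc: "acyclic_graph F (induced_edges E F)"
    and maximum: "\<And>F'. induced_forest V E F' \<Longrightarrow> card F' \<le> card F"
    using max unfolding max_induced_forest_def induced_forest_def by auto
  have "finite F" using \<open>F \<subseteq> V\<close> simple unfolding simple_graph_def by (meson finite_subset)
  then have "card F < card (insert w F)" using w by simp
  then have "\<not> induced_forest V E (insert w F)"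
    using maximum not_le by blast
  then obtain xs where cycle: "is_cycle (insert w F) (induced_edges E (insert w F)) xs"
    using \<open>F \<subseteq> V\<close> w unfolding induced_forest_def acyclic_graph_def by auto
  then have xs_F: "set xs - {w} \<subseteq> F" unfolding is_cycle_def by auto
  have "w \<in> set xs"
  proof (rule ccontr)
    assume "w \<notin> set xs"
    with xs_F have "is_cycle F (induced_edges E F) xs"
      by (intro is_cycle_mono[OF cycle]) (auto simp: induced_edges_def)
    with acyc show False unfolding acyclic_graph_def by blast
  qed
  then obtain a b where "a \<noteq> b"
    and "{w, a} \<in> induced_edges E (insert w F)" "{w, b} \<in> induced_edges E (insert w F)"
    and "a \<in> set xs - {w}"
    and path: "reach (induced_edges (induced_edges E (insert w F)) (set xs - {w})) a b"
    by (rule is_cycle_through_vertex[OF cycle])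
  then have wa: "{w, a} \<in> E" and wb: "{w, b} \<in> E" and "a \<in> F"
    using xs_F by (auto simp: induced_edges_def)
  have "reach (induced_edges E F) a b"
    using path by (rule reach_mono[rotated]) (use xs_F in \<open>auto simp: induced_edges_def\<close>)
  define T where "T = {z. reach (induced_edges E F) a z}"
  have "T \<in> components E F" unfolding T_def components_def using \<open>a \<in> F\<close> by auto
  moreover have "{a, b} \<subseteq> {z \<in> T. {w, z} \<in> E}"
    using wa wb \<open>reach (induced_edges E F) a b\<close> unfolding T_def by (simp add: reach_refl)
  moreover have "finite {z \<in> T. {w, z} \<in> E}"
  proof (rule finite_subset)
    show "{z \<in> T. {w, z} \<in> E} \<subseteq> V"
    proof
      fix z assume "z \<in> {z \<in> T. {w, z} \<in> E}"
      then have "{w, z} \<in> E" by simp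
      then have "{w, z} \<subseteq> V" using simple unfolding simple_graph_def by blast
      then show "z \<in> V" by simp
    qed
  qed (use simple in \<open>simp add: simple_graph_def\<close>)
  ultimately have "card {a, b} \<le> card {z \<in> T. {w, z} \<in> E}" by (simp add: card_mono)
  then have "2 \<le> card {z \<in> T. {w, z} \<in> E}" using \<open>a \<noteq> b\<close> by simp
  then show ?thesis using \<open>T \<in> components E F\<close> by blast
qed

lemma is_leaf_unique_edge:
  assumes "is_leaf W B y" "e \<in> B" "y \<in> e"
  shows "\<forall>e'\<in>B. y \<in> e' \<longrightarrow> e' = e"
proof -
  have "card {e \<in> B. y \<in> e} = 1" using assms(1) unfolding is_leaf_def degree_def by simp
  then obtain f where f: "{e \<in> B. y \<in> e} = {f}" by (rule card_1_singletonE)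
  show ?thesis
  proof (intro ballI impI)
    fix e' assume "e' \<in> B" "y \<in> e'"
    then have "e' \<in> {f}" "e \<in> {f}" using assms(2,3) unfolding f[symmetric] by simp_all
    then show "e' = e" by simp
  qed
qed

lemma degree_induced_edges:
  assumes "\<forall>e\<in>B. x \<in> e \<longrightarrow> e \<subseteq> W"
  shows "degree (induced_edges B W) x = degree B x"
proof -
  have "{e \<in> induced_edges B W. x \<in> e} = {e \<in> B. x \<in> e}"
    using assms unfolding induced_edges_def by auto
  then show ?thesis unfolding degree_def by simp
qed

lemma edge_leaving_induced_leaf:
  assumes "simple_graph U B" "x \<in> W"
    and "degree (induced_edges B W) x = 1" "degree B x \<noteq> 1"
  obtains y where "{x, y} \<in> B" "y \<in> U - W"
proof -
  have "\<not> (\<forall>e\<in>B. x \<in> e \<longrightarrow> e \<subseteq> W)"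
    using degree_induced_edges[of B x W] assms(3,4) by auto
  then obtain e y where e: "e \<in> B" "x \<in> e" "y \<in> e" "y \<notin> W" by blast
  have "e \<subseteq> U" "card e = 2"
    using assms(1) e(1) unfolding simple_graph_def by auto
  moreover from \<open>card e = 2\<close> obtain a b where "e = {a, b}" unfolding card_2_iff by blast
  moreover have "x \<noteq> y" using \<open>x \<in> W\<close> \<open>y \<notin> W\<close> by metis
  ultimately have "e = {x, y}" "y \<in> U" using e(2,3) by auto
  then show ?thesis using that e(1,4) by blast
qed

lemma skeleton_reattach_leaf:
  assumes simple: "simple_graph V E" and max: "max_induced_forest V E F"
    and skel: "skeleton V E F r B"
    and uw: "{Inr u, Inr w} \<in> B" and leaf: "is_leaf (H_verts V E F) B (Inr w)"
  shows "\<exists>B'. skeleton V E F r B' \<and> num_two_edges V E F B < num_two_edges V E F B'"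
proof -
  have B_H: "B \<subseteq> H_edges V E F" and tree: "is_tree_graph (H_verts V E F) B"
    and root: "r \<in> Inl ` components E F"
    using skel unfolding skeleton_def by auto
  have "w \<in> V - F" using leaf unfolding is_leaf_def H_verts_def by auto
  then obtain T where T: "T \<in> components E F" and two: "2 \<le> card {z \<in> T. {w, z} \<in> E}"
    using max_induced_forest_two_neighbours_in_component[OF simple max] by blast
  have pendant: "\<forall>e\<in>B. Inr w \<in> e \<longrightarrow> e = {Inr u, Inr w}"
    using is_leaf_unique_edge[OF leaf uw] by simp
  define B' where "B' = insert {Inr w, Inl T} (B - {{Inr u, Inr w}})"
  have "is_tree_graph (H_verts V E F) B'"
    unfolding B'_def using pendant leaf T
    by (intro is_tree_graph_move_leaf[OF tree]) (auto simp: is_leaf_def H_verts_def)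
  moreover have "{Inr w, Inl T} \<in> H_edges V E F"
  proof -
    have "{z \<in> T. {w, z} \<in> E} \<noteq> {}" using two by (metis card.empty not_numeral_le_zero)
    then show ?thesis unfolding H_edges_def using \<open>w \<in> V - F\<close> T by blast
  qed
  ultimately have "skeleton V E F r B'"
    unfolding skeleton_def B'_def using B_H root by auto
  moreover have "num_two_edges V E F B' = Suc (num_two_edges V E F B)"
  proof -
    have "two_edge V E F {Inr w, Inl T}"
      unfolding two_edge_def using \<open>w \<in> V - F\<close> T two by blast
    moreover have "\<not> two_edge V E F {Inr u, Inr w}"
      unfolding two_edge_def by (auto simp: doubleton_eq_iff)
    ultimately have "{e \<in> B'. two_edge V E F e} = insert {Inr w, Inl T} {e \<in> B. two_edge V E F e}"
      unfolding B'_def by auto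
    moreover have "{Inr w, Inl T} \<notin> B" using pendant by (auto simp: doubleton_eq_iff)
    moreover have "finite B"
      using tree simple_graph_finite_edges unfolding is_tree_graph_def by blast
    ultimately show ?thesis unfolding num_two_edges_def by simp
  qed
  ultimately show ?thesis by auto
qed

theorem corollary3:
  fixes V :: "'v set" and E :: "'v set set" and F :: "'v set"
    and r :: "'v set + 'v" and B :: "('v set + 'v) set set"
  assumes "simple_graph V E" and "connected_graph V E"
    and "max_induced_forest V E F"
    and "skeleton V E F r B"
    and "\<forall>r' B'. skeleton V E F r' B' \<longrightarrow> num_two_edges V E F B' \<le> num_two_edges V E F B"
  shows "\<forall>x. is_leaf (H_verts V E F - {Inr u | u. u \<in> V - F \<and> is_leaf (H_verts V E F) B (Inr u)})
               (induced_edges B (H_verts V E F - {Inr u | u. u \<in> V - F \<and> is_leaf (H_verts V E F) B (Inr u)})) x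
             \<longrightarrow> x \<in> Inl ` components E F"
proof (intro allI impI)
  fix x
  let ?H = "H_verts V E F"
  let ?W = "?H - {Inr u | u. u \<in> V - F \<and> is_leaf ?H B (Inr u)}"
  assume inner_leaf: "is_leaf ?W (induced_edges B ?W) x"
  show "x \<in> Inl ` components E F"
  proof (rule ccontr)
    assume "x \<notin> Inl ` components E F"
    have "x \<in> ?W" and inner_degree: "degree (induced_edges B ?W) x = 1"
      using inner_leaf unfolding is_leaf_def by auto
    then obtain u where x: "x = Inr u" "u \<in> V - F"
      using \<open>x \<notin> Inl ` components E F\<close> unfolding H_verts_def by auto
    have "simple_graph ?H B"
      using \<open>skeleton V E F r B\<close> unfolding skeleton_def is_tree_graph_def by blast
    moreover have "degree B x \<noteq> 1" using x \<open>x \<in> ?W\<close> unfolding is_leaf_def by auto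
    ultimately obtain y where "{x, y} \<in> B" "y \<in> ?H - ?W"
      by (rule edge_leaving_induced_leaf[OF _ \<open>x \<in> ?W\<close> inner_degree])
    moreover have "y \<in> {Inr u | u. u \<in> V - F \<and> is_leaf ?H B (Inr u)}"
      using \<open>y \<in> ?H - ?W\<close> by auto
    then obtain w where "y = Inr w" "is_leaf ?H B (Inr w)" by blast
    ultimately obtain B' where "skeleton V E F r B'" "num_two_edges V E F B < num_two_edges V E F B'"
      using skeleton_reattach_leaf[OF assms(1,3,4)] x(1) by blast
    then show False using assms(5) by (meson leD)
  qed
qed

end
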